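(* Let $G$ be a connected graph and let $G'$ be the graph obtained from $G$ by adding a new vertex adjacent to all vertices of $G$. Then $G$ is connected-domishold if and only if $G'$ is connected-domishold.
   Context: A connected dominating set (CD set) of a connected graph $G$ is a set $S\subseteq V(G)$ such that every vertex not in $S$ has a neighbor in $S$ and $G[S]$ is connected. A graph $G=(V,E)$ is connected-domishold if there exist $w:V\to\mathbb{R}_{\ge0}$ and $t\in\mathbb{R}_{\ge0}$ such that for every $S\subseteq V$, $\sum_{x\in S}w(x)\ge t$ iff $S$ is a CD set of $G$. *)

theory Defs
  imports Complex_Main
begin

definition graph :: "'a set \<Rightarrow> ('a \<Rightarrow> 'a \<Rightarrow> bool) \<Rightarrow> bool" where
  "graph V E \<longleftrightarrow> finite V \<and> (\<forall>x y. E x y \<longrightarrow> x \<in> V \<and> y \<in> V)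
     \<and> (\<forall>x y. E x y \<longrightarrow> E y x) \<and> (\<forall>x. \<not> E x x)"

definition induced_connected :: "('a \<Rightarrow> 'a \<Rightarrow> bool) \<Rightarrow> 'a set \<Rightarrow> bool" where
  "induced_connected E S \<longleftrightarrow> S \<noteq> {} \<and>
     (\<forall>x\<in>S. \<forall>y\<in>S. (\<lambda>u v. u \<in> S \<and> v \<in> S \<and> E u v)\<^sup>*\<^sup>* x y)"

definition connected_graph :: "'a set \<Rightarrow> ('a \<Rightarrow> 'a \<Rightarrow> bool) \<Rightarrow> bool" where
  "connected_graph V E \<longleftrightarrow> induced_connected E V"

definition dominating_set :: "'a set \<Rightarrow> ('a \<Rightarrow> 'a \<Rightarrow> bool) \<Rightarrow> 'a set \<Rightarrow> bool" where
  "dominating_set V E S \<longleftrightarrow> S \<subseteq> V \<and> (\<forall>x\<in>V - S. \<exists>y\<in>S. E x y)"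

definition cd_set :: "'a set \<Rightarrow> ('a \<Rightarrow> 'a \<Rightarrow> bool) \<Rightarrow> 'a set \<Rightarrow> bool" where
  "cd_set V E S \<longleftrightarrow> dominating_set V E S \<and> induced_connected E S"

definition connected_domishold :: "'a set \<Rightarrow> ('a \<Rightarrow> 'a \<Rightarrow> bool) \<Rightarrow> bool" where
  "connected_domishold V E \<longleftrightarrow>
     (\<exists>(w :: 'a \<Rightarrow> real) (t :: real). (\<forall>x\<in>V. w x \<ge> 0) \<and> t \<ge> 0 \<and>
        (\<forall>S\<subseteq>V. (\<Sum>x\<in>S. w x) \<ge> t \<longleftrightarrow> cd_set V E S))"

definition add_universal_V :: "'a set \<Rightarrow> 'a option set" where
  "add_universal_V V = insert None (Some ` V)"

definition add_universal_E :: "'a set \<Rightarrow> ('a \<Rightarrow> 'a \<Rightarrow> bool) \<Rightarrow> 'a option \<Rightarrow> 'a option \<Rightarrow> bool" where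
  "add_universal_E V E u v = (case (u, v) of
      (Some x, Some y) \<Rightarrow> E x y
    | (None, Some y) \<Rightarrow> y \<in> V
    | (Some x, None) \<Rightarrow> x \<in> V
    | (None, None) \<Rightarrow> False)"

end

theory Submission
  imports Defs
begin

text \<open>A set containing the universal vertex is always a CD set of the cone, while a set of
 original vertices is a CD set of the cone exactly when it is one of the original graph.
 So weights for the original graph extend to the cone by giving the universal vertex the
 threshold as weight, and weights for the cone restrict to the original vertices with the
 same threshold.\<close>

lemma add_universal_E_simps [simp]:
  "add_universal_E V E (Some x) (Some y) = E x y"
  "add_universal_E V E None (Some y) = (y \<in> V)"
  "add_universal_E V E (Some x) None = (x \<in> V)"
  "add_universal_E V E None None = False"
  by (simp_all add: add_universal_E_def)

lemma subset_add_universal_V_cases: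
  assumes "S \<subseteq> add_universal_V V"
  obtains "None \<in> S" | T where "T \<subseteq> V" "S = Some ` T"
proof (cases "None \<in> S")
  case False
  have "S \<subseteq> Some ` {x. Some x \<in> S}"
  proof
    fix u assume "u \<in> S"
    with False obtain x where "u = Some x" by (cases u) auto
    with \<open>u \<in> S\<close> show "u \<in> Some ` {x. Some x \<in> S}" by auto
  qed
  then have "S = Some ` {x. Some x \<in> S}" by auto
  moreover have "{x. Some x \<in> S} \<subseteq> V"
    using assms by (auto simp: add_universal_V_def)
  ultimately show ?thesis using that by blast
qed (use that in blast)

lemma induced_walk_Some_iff:
  "(\<lambda>u v. u \<in> Some ` T \<and> v \<in> Some ` T \<and> add_universal_E V E u v)\<^sup>*\<^sup>* (Some x) (Some y)
     \<longleftrightarrow> (\<lambda>u v. u \<in> T \<and> v \<in> T \<and> E u v)\<^sup>*\<^sup>* x y"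
  (is "?R'\<^sup>*\<^sup>* _ _ \<longleftrightarrow> ?R\<^sup>*\<^sup>* _ _")
proof
  have "?R\<^sup>*\<^sup>* x (the b)" if "?R'\<^sup>*\<^sup>* a b" "a = Some x" for a b
    using that
  proof (induction rule: rtranclp_induct)
    case (step b c)
    then obtain z y where "b = Some z" "c = Some y" "?R z y" by auto
    with step show ?case by (simp add: rtranclp.rtrancl_into_rtrancl)
  qed simp
  then show "?R'\<^sup>*\<^sup>* (Some x) (Some y) \<Longrightarrow> ?R\<^sup>*\<^sup>* x y"
    by fastforce
next
  show "?R\<^sup>*\<^sup>* x y \<Longrightarrow> ?R'\<^sup>*\<^sup>* (Some x) (Some y)"
    by (induction rule: rtranclp_induct) (auto intro: rtranclp.rtrancl_into_rtrancl)
qed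

lemma induced_connected_Some_image_iff:
  "induced_connected (add_universal_E V E) (Some ` T) \<longleftrightarrow> induced_connected E T"
  unfolding induced_connected_def by (simp add: induced_walk_Some_iff)

lemma dominating_set_Some_image_iff:
  assumes "T \<subseteq> V" "T \<noteq> {}"
  shows "dominating_set (add_universal_V V) (add_universal_E V E) (Some ` T)
           \<longleftrightarrow> dominating_set V E T"
proof -
  have "add_universal_V V - Some ` T = insert None (Some ` (V - T))"
    by (auto simp: add_universal_V_def)
  moreover have "\<exists>b\<in>Some ` T. add_universal_E V E None b"
    using assms by auto
  ultimately show ?thesis
    using assms unfolding dominating_set_def by (auto simp: add_universal_V_def)
qed

lemma cd_set_Some_image_iff:
  assumes "T \<subseteq> V"
  shows "cd_set (add_universal_V V) (add_universal_E V E) (Some ` T) \<longleftrightarrow> cd_set V E T"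
proof (cases "T = {}")
  case True
  then show ?thesis unfolding cd_set_def induced_connected_def by simp
next
  case False
  then show ?thesis
    using assms unfolding cd_set_def
    by (simp add: dominating_set_Some_image_iff induced_connected_Some_image_iff)
qed

lemma cd_set_if_universal_vertex:
  assumes "S \<subseteq> add_universal_V V" "None \<in> S"
  shows "cd_set (add_universal_V V) (add_universal_E V E) S"
proof -
  let ?R = "\<lambda>u v. u \<in> S \<and> v \<in> S \<and> add_universal_E V E u v"
  have edge: "?R u None \<and> ?R None u" if "u \<in> S" "u \<noteq> None" for u
    using that assms by (cases u) (auto simp: add_universal_V_def)
  have star: "?R\<^sup>*\<^sup>* u None \<and> ?R\<^sup>*\<^sup>* None u" if "u \<in> S" for u
    using edge[OF that] by (cases "u = None") auto
  have "dominating_set (add_universal_V V) (add_universal_E V E) S"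
    using assms unfolding dominating_set_def add_universal_V_def
    by (auto intro!: bexI[of _ None])
  moreover have "?R\<^sup>*\<^sup>* u v" if "u \<in> S" "v \<in> S" for u v
    using star that by (meson rtranclp_trans)
  ultimately show ?thesis
    using assms unfolding cd_set_def induced_connected_def by auto
qed

lemma connected_domishold_add_universal:
  assumes "finite V" "connected_domishold V E"
  shows "connected_domishold (add_universal_V V) (add_universal_E V E)"
proof -
  obtain w :: "'a \<Rightarrow> real" and t where
    w: "\<forall>x\<in>V. w x \<ge> 0" "t \<ge> 0" "\<forall>T\<subseteq>V. (\<Sum>x\<in>T. w x) \<ge> t \<longleftrightarrow> cd_set V E T"
    using assms(2) unfolding connected_domishold_def by blast
  define w' where "w' = case_option t w"
  have w'_nonneg: "\<forall>u\<in>add_universal_V V. w' u \<ge> 0"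
    using w unfolding w'_def add_universal_V_def by auto
  have "(\<Sum>u\<in>S. w' u) \<ge> t \<longleftrightarrow> cd_set (add_universal_V V) (add_universal_E V E) S"
    if S: "S \<subseteq> add_universal_V V" for S
    using S
  proof (cases rule: subset_add_universal_V_cases)
    case 1
    have "finite S"
      using S assms(1) finite_subset by (fastforce simp: add_universal_V_def)
    then have "(\<Sum>u\<in>S. w' u) = t + (\<Sum>u\<in>S - {None}. w' u)"
      using \<open>None \<in> S\<close> by (simp add: sum.remove w'_def)
    moreover have "(\<Sum>u\<in>S - {None}. w' u) \<ge> 0"
      using w'_nonneg S by (intro sum_nonneg) auto
    ultimately show ?thesis
      using cd_set_if_universal_vertex[OF S \<open>None \<in> S\<close>] by simp
  next
    case (2 T)
    have "(\<Sum>u\<in>S. w' u) = (\<Sum>x\<in>T. w x)"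
      using \<open>S = Some ` T\<close> by (simp add: sum.reindex w'_def)
    then show ?thesis
      using w(3) 2 cd_set_Some_image_iff[OF \<open>T \<subseteq> V\<close>, of E] by simp
  qed
  then show ?thesis
    unfolding connected_domishold_def using w'_nonneg w(2) by blast
qed

lemma connected_domishold_remove_universal:
  assumes "connected_domishold (add_universal_V V) (add_universal_E V E)"
  shows "connected_domishold V E"
proof -
  obtain w' :: "'a option \<Rightarrow> real" and t where
    w': "\<forall>u\<in>add_universal_V V. w' u \<ge> 0" "t \<ge> 0"
      "\<forall>S\<subseteq>add_universal_V V. (\<Sum>u\<in>S. w' u) \<ge> t
         \<longleftrightarrow> cd_set (add_universal_V V) (add_universal_E V E) S"
    using assms unfolding connected_domishold_def by blast
  have "(\<Sum>x\<in>T. w' (Some x)) \<ge> t \<longleftrightarrow> cd_set V E T" if "T \<subseteq> V" for T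
  proof -
    have "Some ` T \<subseteq> add_universal_V V"
      using that by (auto simp: add_universal_V_def)
    then have "(\<Sum>u\<in>Some ` T. w' u) \<ge> t
                 \<longleftrightarrow> cd_set (add_universal_V V) (add_universal_E V E) (Some ` T)"
      by (rule w'(3)[rule_format])
    then show ?thesis
      by (simp add: sum.reindex cd_set_Some_image_iff[OF that])
  qed
  moreover have "\<forall>x\<in>V. w' (Some x) \<ge> 0"
    using w'(1) by (simp add: add_universal_V_def)
  ultimately show ?thesis
    unfolding connected_domishold_def using w'(2)
    by (intro exI[of _ "\<lambda>x. w' (Some x)"] exI[of _ t]) auto
qed

theorem mainTheorem3:
  fixes V :: "'a set" and E :: "'a \<Rightarrow> 'a \<Rightarrow> bool"
  assumes "graph V E" and "connected_graph V E"
  shows "connected_domishold V E \<longleftrightarrow>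
         connected_domishold (add_universal_V V) (add_universal_E V E)"
proof -
  have "finite V"
    using \<open>graph V E\<close> by (simp add: graph_def)
  show ?thesis
    using connected_domishold_add_universal[OF \<open>finite V\<close>] connected_domishold_remove_universal
    by (rule iffI)
qed

end
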